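(* Let $G=(V,E,\ell,\Phi)$ be a strongly connected trackable weak model. If $(x_1,\dots,x_t)$ and $(x'_1,\dots,x'_t)$ are walks in $G$ with $x_1=x'_1$, $x_t=x'_t$ and $\ell(x_i)=\ell(x'_i)$ for all $1\le i\le t$, then $x_i=x'_i$ for all $1\le i\le t$. Equivalently, when observations start from a known node, at most one hypothesis (as a walk up to time $t$) visits a given node at a given time $t$.
   Context: A (single-colored) weak model $G=(V,E,\ell,\Phi)$ consists of a finite set of nodes $V$, directed edges $E\subseteq V\times V$, a finite color set $\Phi$ and a coloring $\ell:V\to\Phi$. A walk of length $t$ is a node sequence $(x_1,\dots,x_t)$ with $(x_i,x_{i+1})\in E$. For $Y_{[t]}\in\Phi^t$, a hypothesis is a walk $(x_1,\dots,x_t)$ with $\ell(x_i)=Y_i$ for all $i$; $\mathcal H_G(Y_{[t]})$ is the set of hypotheses and $n_G(t)=\max_{Y_{[t]}}|\mathcal H_G(Y_{[t]})|$. $G$ is trackable if $n_G(t)=O(t^k)$ for some $k\ge0$, and strongly connected if every node is reachable from every node by a directed path. *)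

theory Defs
  imports Main "HOL-Library.Landau_Symbols"
begin

definition weak_model :: "'v set \<Rightarrow> ('v \<times> 'v) set \<Rightarrow> ('v \<Rightarrow> 'c) \<Rightarrow> 'c set \<Rightarrow> bool" where
  "weak_model V E l Phi \<longleftrightarrow> finite V \<and> E \<subseteq> V \<times> V \<and> finite Phi \<and> l ` V \<subseteq> Phi"

definition is_walk :: "'v set \<Rightarrow> ('v \<times> 'v) set \<Rightarrow> 'v list \<Rightarrow> bool" where
  "is_walk V E xs \<longleftrightarrow> set xs \<subseteq> V \<and> (\<forall>i. Suc i < length xs \<longrightarrow> (xs ! i, xs ! Suc i) \<in> E)"

definition hypotheses :: "'v set \<Rightarrow> ('v \<times> 'v) set \<Rightarrow> ('v \<Rightarrow> 'c) \<Rightarrow> 'c list \<Rightarrow> 'v list set" where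
  "hypotheses V E l Y = {xs. is_walk V E xs \<and> length xs = length Y \<and> map l xs = Y}"

definition n_G :: "'v set \<Rightarrow> ('v \<times> 'v) set \<Rightarrow> ('v \<Rightarrow> 'c) \<Rightarrow> 'c set \<Rightarrow> nat \<Rightarrow> nat" where
  "n_G V E l Phi t = Max ((\<lambda>Y. card (hypotheses V E l Y)) ` {Y. set Y \<subseteq> Phi \<and> length Y = t})"

definition trackable :: "'v set \<Rightarrow> ('v \<times> 'v) set \<Rightarrow> ('v \<Rightarrow> 'c) \<Rightarrow> 'c set \<Rightarrow> bool" where
  "trackable V E l Phi \<longleftrightarrow> (\<exists>k::nat. (\<lambda>t. real (n_G V E l Phi t)) \<in> O(\<lambda>t. real t ^ k))"

definition strongly_connected :: "'v set \<Rightarrow> ('v \<times> 'v) set \<Rightarrow> bool" where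
  "strongly_connected V E \<longleftrightarrow> (\<forall>x\<in>V. \<forall>y\<in>V. (x, y) \<in> E\<^sup>*)"

end

theory Submission
  imports Defs "HOL-Real_Asymp.Real_Asymp"
begin

text \<open>Suppose two distinct walks from a to b carry the same colours. Closing each of them with
  a fixed walk from b back to a (strong connectivity) yields two distinct loops at a of equal
  length L and with equal colour sequences. Concatenating k of these loops in an arbitrary order
  gives 2^k distinct walks of length kL + 1, all with the same colour sequence, so the number of
  hypotheses grows exponentially along the lengths kL + 1, which contradicts trackability.\<close>

lemma is_walk_Nil [simp]: "is_walk V E []"
  unfolding is_walk_def by simp

lemma is_walk_Cons:
  "is_walk V E (x # xs) \<longleftrightarrow> x \<in> V \<and> is_walk V E xs \<and> (xs \<noteq> [] \<longrightarrow> (x, hd xs) \<in> E)"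
  by (cases xs) (auto simp: is_walk_def nth_Cons split: nat.splits)

lemma is_walk_append:
  "is_walk V E (p @ q) \<longleftrightarrow>
     is_walk V E p \<and> is_walk V E q \<and> (p \<noteq> [] \<and> q \<noteq> [] \<longrightarrow> (last p, hd q) \<in> E)"
  by (induction p) (auto simp: is_walk_Cons)

lemma is_walk_append_last_Cons:
  assumes "p \<noteq> []" "is_walk V E p" "is_walk V E (last p # q)"
  shows "is_walk V E (p @ q)"
  using assms by (auto simp: is_walk_append is_walk_Cons)

lemma rtrancl_imp_walk:
  assumes "(x, y) \<in> E\<^sup>*" "x \<in> V" "E \<subseteq> V \<times> V"
  shows "\<exists>p. is_walk V E (x # p) \<and> last (x # p) = y"
  using assms(1)
proof (induction rule: rtrancl_induct)
  case base
  show ?case using \<open>x \<in> V\<close> by (intro exI[of _ "[]"]) (simp add: is_walk_Cons)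
next
  case (step y z)
  then obtain p where p: "is_walk V E (x # p)" "last (x # p) = y" by blast
  have "is_walk V E (last (x # p) # [z])"
    using step.hyps(2) assms(3) p(2) by (auto simp: is_walk_Cons)
  then have "is_walk V E ((x # p) @ [z])"
    by (intro is_walk_append_last_Cons) (use p in simp_all)
  then show ?case by (intro exI[of _ "p @ [z]"]) simp
qed

text \<open>A loop at a is stored without its initial node a, so that loops at a concatenate
  to walks starting at a.\<close>

definition loop_at :: "'v set \<Rightarrow> ('v \<times> 'v) set \<Rightarrow> 'v \<Rightarrow> 'v list \<Rightarrow> bool" where
  "loop_at V E a C \<longleftrightarrow> C \<noteq> [] \<and> last C = a \<and> is_walk V E (a # C)"

lemma is_walk_concat_loops:
  assumes "a \<in> V" "\<forall>C \<in> set Cs. loop_at V E a C"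
  shows "is_walk V E (a # concat Cs)"
  using assms(2)
proof (induction Cs)
  case Nil
  then show ?case using \<open>a \<in> V\<close> by (simp add: is_walk_Cons)
next
  case (Cons C Cs)
  then have "loop_at V E a C" "is_walk V E (a # concat Cs)" by simp_all
  then have "is_walk V E ((a # C) @ concat Cs)"
    by (intro is_walk_append_last_Cons) (auto simp: loop_at_def)
  then show ?case by simp
qed

lemma twin_walks_imp_twin_loops:
  assumes "strongly_connected V E" "E \<subseteq> V \<times> V"
    and "is_walk V E (a # xs)" "is_walk V E (a # ys)"
    and "length xs = length ys" "xs \<noteq> ys" "last (a # xs) = last (a # ys)"
    and "map l xs = map l ys"
  shows "\<exists>C1 C0. loop_at V E a C1 \<and> loop_at V E a C0 \<and> C1 \<noteq> C0 \<and>
           length C1 = length C0 \<and> map l C1 = map l C0"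
proof -
  have "xs \<noteq> []" "ys \<noteq> []" using assms(5,6) by auto
  define b where "b = last xs"
  have "a \<in> V" "b \<in> V"
    using assms(3) \<open>xs \<noteq> []\<close> unfolding b_def is_walk_def by auto
  then obtain r where r: "is_walk V E (b # r)" "last (b # r) = a"
    using rtrancl_imp_walk[of b a E V] assms(1,2) unfolding strongly_connected_def by blast
  have "loop_at V E a (zs @ r)" if "is_walk V E (a # zs)" "zs \<noteq> []" "last zs = b" for zs
  proof -
    have "is_walk V E ((a # zs) @ r)"
      using that r(1) by (intro is_walk_append_last_Cons) simp_all
    moreover have "last (zs @ r) = a"
      using that(2,3) r(2) by (auto simp: last_append)
    ultimately show ?thesis using that(2) by (simp add: loop_at_def)
  qed
  moreover have "last ys = b" using assms(7) \<open>xs \<noteq> []\<close> \<open>ys \<noteq> []\<close> by (simp add: b_def)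
  ultimately have "loop_at V E a (xs @ r)" "loop_at V E a (ys @ r)"
    using assms(3,4) \<open>xs \<noteq> []\<close> \<open>ys \<noteq> []\<close> by (simp_all add: b_def)
  then show ?thesis
    using assms(5,6,8) by (intro exI[of _ "xs @ r"] exI[of _ "ys @ r"]) simp
qed

lemma finite_hypotheses:
  assumes "finite V"
  shows "finite (hypotheses V E l Y)"
proof (rule finite_subset)
  show "hypotheses V E l Y \<subseteq> {xs. set xs \<subseteq> V \<and> length xs = length Y}"
    unfolding hypotheses_def is_walk_def by auto
  show "finite {xs. set xs \<subseteq> V \<and> length xs = length Y}"
    using assms by (rule finite_lists_length_eq)
qed

lemma card_hypotheses_le_n_G:
  assumes "weak_model V E l Phi" "set Y \<subseteq> Phi"
  shows "card (hypotheses V E l Y) \<le> n_G V E l Phi (length Y)"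
  unfolding n_G_def
proof (rule Max_ge)
  show "finite ((\<lambda>Y. card (hypotheses V E l Y)) ` {Y'. set Y' \<subseteq> Phi \<and> length Y' = length Y})"
    using assms(1) finite_lists_length_eq[of Phi] by (simp add: weak_model_def)
qed (use assms(2) in blast)

lemma twin_loops_imp_exponential_hypotheses:
  assumes "weak_model V E l Phi" "loop_at V E a C1" "loop_at V E a C0"
    and "C1 \<noteq> C0" "length C1 = length C0" "map l C1 = map l C0"
  shows "2 ^ k \<le> n_G V E l Phi (k * length C1 + 1)"
proof -
  define pick where "pick b = (if b then C1 else C0)" for b
  define W where "W bs = a # concat (map pick bs)" for bs
  define Y where "Y = l a # concat (replicate k (map l C1))"
  let ?words = "{bs :: bool list. length bs = k}"
  have "a \<in> V" using assms(2) by (simp add: loop_at_def is_walk_Cons)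
  have "inj pick" using assms(4) by (auto intro: injI simp: pick_def split: if_splits)
  have "inj_on W ?words"
  proof (rule inj_onI)
    fix bs cs assume "bs \<in> ?words" "cs \<in> ?words" "W bs = W cs"
    then have "concat (map pick bs) = concat (map pick cs)" by (simp add: W_def)
    moreover have "\<forall>(x, y) \<in> set (zip (map pick bs) (map pick cs)). length x = length y"
      using assms(5) by (auto simp: zip_map_map pick_def)
    ultimately have "map pick bs = map pick cs"
      using \<open>bs \<in> ?words\<close> \<open>cs \<in> ?words\<close> by (simp add: concat_eq_concat_iff)
    then show "bs = cs" using \<open>inj pick\<close> by (simp add: inj_map_eq_map)
  qed
  have "W bs \<in> hypotheses V E l Y" if "length bs = k" for bs
  proof -
    have "map l \<circ> pick = (\<lambda>_. map l C1)" using assms(6) by (auto simp: pick_def)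
    then have "map l (W bs) = Y"
      using that by (simp add: W_def Y_def map_concat map_replicate_const)
    moreover have "is_walk V E (W bs)"
      unfolding W_def using \<open>a \<in> V\<close> assms(2,3)
      by (intro is_walk_concat_loops) (auto simp: pick_def)
    ultimately show ?thesis by (simp add: hypotheses_def flip: \<open>map l (W bs) = Y\<close>)
  qed
  then have "W ` ?words \<subseteq> hypotheses V E l Y" by blast
  then have "card (W ` ?words) \<le> card (hypotheses V E l Y)"
    using assms(1) by (intro card_mono finite_hypotheses) (simp_all add: weak_model_def)
  also have "\<dots> \<le> n_G V E l Phi (length Y)"
  proof (rule card_hypotheses_le_n_G[OF assms(1)])
    have "set (a # C1) \<subseteq> V" using assms(2) by (simp add: loop_at_def is_walk_def)
    then show "set Y \<subseteq> Phi"
      using assms(1) by (auto simp: Y_def weak_model_def)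
  qed
  finally show ?thesis
    using card_image[OF \<open>inj_on W ?words\<close>] card_lists_length_eq[of "UNIV :: bool set" k]
    by (simp add: Y_def length_concat sum_list_replicate)
qed

lemma polynomial_bound_excludes_doubling:
  fixes f :: "nat \<Rightarrow> real"
  assumes "f \<in> O(\<lambda>t. real t ^ d)" and "L > 0"
  shows "\<not> (\<forall>k. 2 ^ k \<le> f (k * L + 1))"
proof
  assume doubling: "\<forall>k. 2 ^ k \<le> f (k * L + 1)"
  have "filterlim (\<lambda>k. k * L + 1) at_top sequentially"
    using \<open>L > 0\<close> by real_asymp
  have "(\<lambda>k::nat. 2 ^ k :: real) \<in> O(\<lambda>k. f (k * L + 1))"
    using doubling by (intro bigoI[of _ 1] always_eventually) (auto intro: order.trans[OF _ abs_ge_self])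
  also have "(\<lambda>k. f (k * L + 1)) \<in> O(\<lambda>k. real (k * L + 1) ^ d)"
    using landau_o.big.compose[OF assms(1) \<open>filterlim _ at_top sequentially\<close>] .
  also have "(\<lambda>k. real (k * L + 1) ^ d) \<in> O(\<lambda>k. real k ^ d)"
    using \<open>L > 0\<close> by real_asymp
  also have "(\<lambda>k. real k ^ d) \<in> o(\<lambda>k::nat. 2 ^ k :: real)"
    by real_asymp
  finally show False
    by (simp add: landau_o.small_refl_iff)
qed

theorem corollary2:
  fixes V :: "'v set" and E :: "('v \<times> 'v) set" and l :: "'v \<Rightarrow> 'c" and Phi :: "'c set"
    and xs ys :: "'v list"
  assumes "weak_model V E l Phi"
    and "strongly_connected V E"
    and "trackable V E l Phi"
    and "is_walk V E xs" and "is_walk V E ys"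
    and "length xs = length ys" and "xs \<noteq> []"
    and "hd xs = hd ys" and "last xs = last ys"
    and "map l xs = map l ys"
  shows "xs = ys"
proof (rule ccontr)
  assume "xs \<noteq> ys"
  obtain a xs' ys' where xs: "xs = a # xs'" and ys: "ys = a # ys'"
    using assms(6-8) by (cases xs; cases ys) auto
  have "E \<subseteq> V \<times> V" using assms(1) by (simp add: weak_model_def)
  then obtain C1 C0 where C: "loop_at V E a C1" "loop_at V E a C0" "C1 \<noteq> C0"
      "length C1 = length C0" "map l C1 = map l C0"
    using twin_walks_imp_twin_loops[OF assms(2), of a xs' ys' l] assms(4-6,9,10) \<open>xs \<noteq> ys\<close>
    unfolding xs ys by auto
  obtain d where "(\<lambda>t. real (n_G V E l Phi t)) \<in> O(\<lambda>t. real t ^ d)"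
    using assms(3) unfolding trackable_def by blast
  moreover have "length C1 > 0" using C(1) by (simp add: loop_at_def)
  moreover have "\<forall>k. 2 ^ k \<le> real (n_G V E l Phi (k * length C1 + 1))"
    using twin_loops_imp_exponential_hypotheses[OF assms(1) C]
    by (metis of_nat_le_iff of_nat_numeral of_nat_power)
  ultimately show False by (metis polynomial_bound_excludes_doubling)
qed

end
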